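(* Let $P,Q,R$ be distributions and let $\alpha\in(1/\sqrt{2},1)$. If $$\mathrm{H}(Q,R)\geq \frac{\sqrt{2}}{\sqrt{2}\alpha-1}\,\mathrm{H}(P,R),$$ then for every $n\geq 1$, with $X_1,\dots,X_n$ i.i.d. from $R$, $$\mathbb{E}\big[\mathrm{T}(P,Q,X^n)\big]\geq 2(1-\alpha^2)\,\mathrm{H}^2(Q,R).$$
   Context: Distributions $P,Q,R$ are probability distributions on a measurable space $\mathcal{X}$, identified with their densities with respect to a common $\sigma$-finite reference measure $\mu$ (e.g. Lebesgue measure, or counting measure in the discrete case). All integrals and norms are taken with respect to $\mu$, with $\|U\|_p = (\int |U|^p\, d\mu)^{1/p}$. The Hellinger distance is $\mathrm{H}(P,Q) = \frac{1}{\sqrt{2}}\|\sqrt{P}-\sqrt{Q}\|_2$. For a sample $X^n=(X_1,\dots,X_n)$, the test statistic is $$\mathrm{T}(P,Q,X^n) = \frac{1}{n}\sum_{i=1}^n \frac{P(X_i)-Q(X_i)}{P(X_i)+Q(X_i)},$$ where a summand is interpreted as $0$ whenever $P(X_i)+Q(X_i)=0$. *)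

theory Defs
  imports "HOL-Probability.Probability"
begin

text \<open>A distribution on the measure space M (with sigma-finite reference measure M)
  is identified with its density: a nonnegative measurable function integrating to 1.\<close>
definition is_density :: "'a measure \<Rightarrow> ('a \<Rightarrow> real) \<Rightarrow> bool" where
  "is_density M P \<longleftrightarrow> P \<in> borel_measurable M \<and> (\<forall>x\<in>space M. 0 \<le> P x)
     \<and> (\<integral>\<^sup>+ x. ennreal (P x) \<partial>M) = 1"

definition hellinger :: "'a measure \<Rightarrow> ('a \<Rightarrow> real) \<Rightarrow> ('a \<Rightarrow> real) \<Rightarrow> real" where
  "hellinger M P Q = (1 / sqrt 2) * sqrt (\<integral> x. (sqrt (P x) - sqrt (Q x))\<^sup>2 \<partial>M)"

definition tsum_term :: "('a \<Rightarrow> real) \<Rightarrow> ('a \<Rightarrow> real) \<Rightarrow> 'a \<Rightarrow> real" where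
  "tsum_term P Q x = (if P x + Q x = 0 then 0 else (P x - Q x) / (P x + Q x))"

definition test_stat :: "('a \<Rightarrow> real) \<Rightarrow> ('a \<Rightarrow> real) \<Rightarrow> nat \<Rightarrow> (nat \<Rightarrow> 'a) \<Rightarrow> real" where
  "test_stat P Q n X = (1 / real n) * (\<Sum>i<n. tsum_term P Q (X i))"

end

theory Submission
  imports Defs
begin

text \<open>Write \<open>p, q, r\<close> for the square roots of the densities. By linearity, and since every
  sample point has law \<open>R\<close>, the expected statistic is \<open>\<integral> R (P - Q) / (P + Q)\<close>; as \<open>P\<close> and \<open>Q\<close>
  have the same mass, this equals \<open>\<integral> R (P - Q) / (P + Q) - (P - Q) / 2\<close>. Pointwise, the latter
  integrand is at least \<open>(q - r)\<^sup>2 / 2 - \<bar>q - r\<bar> \<bar>p - r\<bar> - (p - r)\<^sup>2\<close>, a polynomial inequality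
  checked on each ordering of \<open>p, q, r\<close>. Splitting the cross term by AM-GM with weight
  \<open>b = \<alpha> - 1 / \<surd>2\<close> and integrating gives the lower bound \<open>(1 - b) H\<^sup>2(Q,R) - (2 + 1 / b) H\<^sup>2(P,R)\<close>.
  The hypothesis says exactly \<open>H(P,R) \<le> b H(Q,R)\<close>, so the bound is at least
  \<open>(1 - 2b - 2b\<^sup>2) H\<^sup>2(Q,R) \<ge> 2 (1 - \<alpha>\<^sup>2) H\<^sup>2(Q,R)\<close>.\<close>

lemma tsum_term_cross_poly_nonneg:
  fixes p q r :: real
  assumes "0 \<le> p" "0 \<le> q" "0 \<le> r"
  shows "0 \<le> (p\<^sup>2 - q\<^sup>2) * (2 * r\<^sup>2 - (p\<^sup>2 + q\<^sup>2))
              + (p\<^sup>2 + q\<^sup>2) * (2 * \<bar>q - r\<bar> * \<bar>p - r\<bar> + 2 * (p - r)\<^sup>2 - (q - r)\<^sup>2)"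
    (is "0 \<le> ?K")
proof -
  consider "r \<le> p" "r \<le> q" | "p \<le> r" "r \<le> q" | "q \<le> r" "r \<le> p"
    | "p \<le> q" "q \<le> r" | "q \<le> p" "p \<le> r"
    by linarith
  then show ?thesis
  proof cases
    case 1
    then obtain x y where xy: "0 \<le> x" "0 \<le> y" "p = r + x" "q = r + y"
      by (intro that[of "p - r" "q - r"]) auto
    have "?K = 2*x*y*y*y + x*x*y*y + 2*x*x*x*y + x*x*x*x + 2*r*y*y*y + 2*r*x*y*y
        + 8*r*x*x*y + 2*r*r*y*y + 4*r*r*x*y"
      unfolding xy using xy by (simp add: power2_eq_square algebra_simps)
    also have "\<dots> \<ge> 0" using assms xy by (intro add_nonneg_nonneg mult_nonneg_nonneg) auto
    finally show ?thesis .
  next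
    case 2
    then obtain x y where xy: "0 \<le> x" "0 \<le> y" "r = p + x" "q = p + x + y"
      by (intro that[of "r - p" "q - r"]) auto
    have "?K = 4*x*y*y*y + 9*x*x*y*y + 6*x*x*x*y + x*x*x*x + 2*p*y*y*y + 10*p*x*y*y
        + 8*p*x*x*y + 2*p*p*y*y + 4*p*p*x*y"
      unfolding xy using xy by (simp add: power2_eq_square algebra_simps)
    also have "\<dots> \<ge> 0" using assms xy by (intro add_nonneg_nonneg mult_nonneg_nonneg) auto
    finally show ?thesis .
  next
    case 3
    then obtain x y where xy: "0 \<le> x" "0 \<le> y" "r = q + x" "p = q + x + y"
      by (intro that[of "r - q" "p - r"]) auto
    have "?K = y*y*y*y + 2*x*y*y*y + x*x*y*y + 2*q*x*x*y + 2*q*x*x*x + 4*q*q*x*y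
        + 2*q*q*x*x"
      unfolding xy using xy by (simp add: power2_eq_square algebra_simps)
    also have "\<dots> \<ge> 0" using assms xy by (intro add_nonneg_nonneg mult_nonneg_nonneg) auto
    finally show ?thesis .
  next
    case 4
    then obtain x y where xy: "0 \<le> x" "0 \<le> y" "q = p + x" "r = p + x + y"
      by (intro that[of "q - p" "r - q"]) auto
    have "?K = x*x*y*y + 2*x*x*x*y + x*x*x*x + 2*p*x*y*y + 6*p*p*y*y + 4*p*p*x*y"
      unfolding xy using xy by (simp add: power2_eq_square algebra_simps)
    also have "\<dots> \<ge> 0" using assms xy by (intro add_nonneg_nonneg mult_nonneg_nonneg) auto
    finally show ?thesis .
  next
    case 5
    then obtain x y where xy: "0 \<le> x" "0 \<le> y" "p = q + x" "r = q + x + y"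
      by (intro that[of "p - q" "r - p"]) auto
    have "?K = 5*x*x*y*y + 4*x*x*x*y + 10*q*x*y*y + 12*q*x*x*y + 2*q*x*x*x + 6*q*q*y*y
        + 8*q*q*x*y + 2*q*q*x*x"
      unfolding xy using xy by (simp add: power2_eq_square algebra_simps)
    also have "\<dots> \<ge> 0" using assms xy by (intro add_nonneg_nonneg mult_nonneg_nonneg) auto
    finally show ?thesis .
  qed
qed

lemma tsum_term_cross_lower_bound:
  assumes "0 \<le> P x" "0 \<le> Q x" "0 \<le> R x"
  shows "(sqrt (Q x) - sqrt (R x))\<^sup>2 / 2 - \<bar>sqrt (Q x) - sqrt (R x)\<bar> * \<bar>sqrt (P x) - sqrt (R x)\<bar>
           - (sqrt (P x) - sqrt (R x))\<^sup>2
         \<le> R x * tsum_term P Q x - (P x - Q x) / 2"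
proof (cases "P x + Q x = 0")
  case True
  then have "P x = 0" "Q x = 0" using assms by auto
  then show ?thesis by (simp add: tsum_term_def power2_eq_square)
next
  case False
  define p q r where "p = sqrt (P x)" "q = sqrt (Q x)" "r = sqrt (R x)"
  have pqr: "0 \<le> p" "0 \<le> q" "0 \<le> r" "P x = p\<^sup>2" "Q x = q\<^sup>2" "R x = r\<^sup>2"
    using assms unfolding p_q_r_def by auto
  have nz: "p\<^sup>2 + q\<^sup>2 \<noteq> 0" using False pqr(4,5) by simp
  have t: "tsum_term P Q x = (p\<^sup>2 - q\<^sup>2) / (p\<^sup>2 + q\<^sup>2)"
    using False unfolding tsum_term_def pqr by simp
  have "R x * tsum_term P Q x - (P x - Q x) / 2
          - ((q - r)\<^sup>2 / 2 - \<bar>q - r\<bar> * \<bar>p - r\<bar> - (p - r)\<^sup>2)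
      = ((p\<^sup>2 - q\<^sup>2) * (2 * r\<^sup>2 - (p\<^sup>2 + q\<^sup>2))
          + (p\<^sup>2 + q\<^sup>2) * (2 * \<bar>q - r\<bar> * \<bar>p - r\<bar> + 2 * (p - r)\<^sup>2 - (q - r)\<^sup>2)) / (2 * (p\<^sup>2 + q\<^sup>2))"
    using nz unfolding t pqr by (simp add: field_simps del: sum_power2_eq_zero_iff)
  also have "\<dots> \<ge> 0"
    using tsum_term_cross_poly_nonneg[OF pqr(1-3)] by simp
  finally show ?thesis unfolding p_q_r_def by simp
qed

lemma tsum_term_lower_bound:
  assumes "0 \<le> P x" "0 \<le> Q x" "0 \<le> R x" "0 < b"
  shows "(1 - b) / 2 * (sqrt (Q x) - sqrt (R x))\<^sup>2 - (1 + 1 / (2 * b)) * (sqrt (P x) - sqrt (R x))\<^sup>2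
         \<le> R x * tsum_term P Q x - (P x - Q x) / 2"
proof -
  define u w where "u = \<bar>sqrt (Q x) - sqrt (R x)\<bar>" "w = \<bar>sqrt (P x) - sqrt (R x)\<bar>"
  have "2 * b * (u * w) \<le> (b * u)\<^sup>2 + w\<^sup>2"
    using sum_squares_bound[of "b * u" w] by (simp add: algebra_simps)
  then have amgm: "u * w \<le> b / 2 * u\<^sup>2 + w\<^sup>2 / (2 * b)"
    using \<open>0 < b\<close> by (simp add: field_simps power2_eq_square)
  have "(1 - b) / 2 * u\<^sup>2 - (1 + 1 / (2 * b)) * w\<^sup>2 = u\<^sup>2 / 2 - (b / 2 * u\<^sup>2 + w\<^sup>2 / (2 * b)) - w\<^sup>2"
    using \<open>0 < b\<close> by (simp add: field_simps)
  also have "\<dots> \<le> u\<^sup>2 / 2 - u * w - w\<^sup>2"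
    using amgm by linarith
  also have "\<dots> \<le> R x * tsum_term P Q x - (P x - Q x) / 2"
    using tsum_term_cross_lower_bound[of P x Q R] assms unfolding u_w_def by simp
  finally show ?thesis unfolding u_w_def by simp
qed

lemma tsum_term_abs_le_1:
  assumes "0 \<le> P x" "0 \<le> Q x"
  shows "\<bar>tsum_term P Q x\<bar> \<le> 1"
  using assms by (auto simp: tsum_term_def abs_le_iff divide_le_eq_1 field_simps)

lemma borel_measurable_tsum_term [measurable]:
  assumes [measurable]: "P \<in> borel_measurable M" "Q \<in> borel_measurable M"
  shows "tsum_term P Q \<in> borel_measurable M"
  unfolding tsum_term_def by measurable

lemma is_densityD:
  assumes "is_density M P"
  shows "P \<in> borel_measurable M" "\<And>x. x \<in> space M \<Longrightarrow> 0 \<le> P x"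
    and "integrable M P" "(\<integral>x. P x \<partial>M) = 1"
proof -
  show P: "P \<in> borel_measurable M" and nonneg: "\<And>x. x \<in> space M \<Longrightarrow> 0 \<le> P x"
    using assms unfolding is_density_def by auto
  have nn_int: "(\<integral>\<^sup>+ x. ennreal (P x) \<partial>M) = 1"
    using assms unfolding is_density_def by auto
  show int: "integrable M P"
    using P nonneg nn_int by (intro integrableI_nonneg) auto
  have "(\<integral>\<^sup>+ x. ennreal (P x) \<partial>M) = ennreal (\<integral>x. P x \<partial>M)"
    using int nonneg by (intro nn_integral_eq_integral) auto
  then show "(\<integral>x. P x \<partial>M) = 1"
    using nn_int by simp
qed

lemma prob_space_density_is_density:
  assumes "is_density M R"
  shows "prob_space (density M (\<lambda>x. ennreal (R x)))"
proof (rule prob_spaceI)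
  have "emeasure (density M (\<lambda>x. ennreal (R x))) (space M)
      = (\<integral>\<^sup>+ x. ennreal (R x) * indicator (space M) x \<partial>M)"
    using is_densityD(1)[OF assms] by (simp add: emeasure_density)
  also have "\<dots> = (\<integral>\<^sup>+ x. ennreal (R x) \<partial>M)"
    by (intro nn_integral_cong) simp
  also have "\<dots> = 1"
    using assms unfolding is_density_def by simp
  finally show "emeasure (density M (\<lambda>x. ennreal (R x))) (space (density M (\<lambda>x. ennreal (R x)))) = 1"
    by simp
qed

lemma integrable_sqrt_diff_sq:
  assumes "is_density M P" "is_density M Q"
  shows "integrable M (\<lambda>x. (sqrt (P x) - sqrt (Q x))\<^sup>2)"
proof (rule Bochner_Integration.integrable_bound)
  show "integrable M (\<lambda>x. P x + Q x)"
    using is_densityD(3) assms by auto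
  show "(\<lambda>x. (sqrt (P x) - sqrt (Q x))\<^sup>2) \<in> borel_measurable M"
    using is_densityD(1) assms by measurable
  have "(sqrt p - sqrt q)\<^sup>2 \<le> p + q" if "0 \<le> p" "0 \<le> q" for p q :: real
    using that by (simp add: power2_diff real_sqrt_mult[symmetric])
  then show "AE x in M. norm ((sqrt (P x) - sqrt (Q x))\<^sup>2) \<le> norm (P x + Q x)"
    using is_densityD(2)[OF assms(1)] is_densityD(2)[OF assms(2)] by (intro AE_I2) force
qed

lemma hellinger_nonneg: "0 \<le> hellinger M P Q"
  unfolding hellinger_def by simp

lemma hellinger_sq: "(hellinger M P Q)\<^sup>2 = (\<integral>x. (sqrt (P x) - sqrt (Q x))\<^sup>2 \<partial>M) / 2"
  unfolding hellinger_def by (simp add: power_mult_distrib power_divide)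

lemma integral_PiM_sample_mean:
  assumes N: "prob_space N" and f: "integrable N f" and "1 \<le> n"
  shows "(\<integral>X. (1 / real n) * (\<Sum>i<n. f (X i)) \<partial>PiM {..<n} (\<lambda>_. N)) = (\<integral>x. f x \<partial>N)"
proof -
  let ?Pi = "PiM {..<n} (\<lambda>_. N)"
  have [measurable]: "f \<in> borel_measurable N"
    using f by simp
  have distr_component: "distr ?Pi N (\<lambda>X. X i) = N" if "i < n" for i
    using distr_PiM_component[of "{..<n}" "\<lambda>_. N" i] N that by simp
  have integrable_component: "integrable ?Pi (\<lambda>X. f (X i))" if "i < n" for i
    using f distr_component[OF that] integrable_distr_eq[of "\<lambda>X. X i" ?Pi N f] that by simp
  have integral_component: "(\<integral>X. f (X i) \<partial>?Pi) = (\<integral>x. f x \<partial>N)" if "i < n" for i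
    using distr_component[OF that] integral_distr[of "\<lambda>X. X i" ?Pi N f] that by simp
  have "(\<integral>X. (\<Sum>i<n. f (X i)) \<partial>?Pi) = (\<Sum>i<n. \<integral>X. f (X i) \<partial>?Pi)"
    using integrable_component by (intro Bochner_Integration.integral_sum) auto
  also have "\<dots> = real n * (\<integral>x. f x \<partial>N)"
    using integral_component by simp
  finally show ?thesis
    using \<open>1 \<le> n\<close> by simp
qed

lemma expectation_test_stat:
  assumes "is_density M P" "is_density M Q" "is_density M R" "1 \<le> n"
  shows "(\<integral>X. test_stat P Q n X \<partial>PiM {..<n} (\<lambda>_. density M (\<lambda>x. ennreal (R x))))
           = (\<integral>x. R x * tsum_term P Q x \<partial>M)"
proof -
  note [measurable] = is_densityD(1)[OF assms(1)] is_densityD(1)[OF assms(2)] is_densityD(1)[OF assms(3)]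
  interpret N: prob_space "density M (\<lambda>x. ennreal (R x))"
    using prob_space_density_is_density[OF assms(3)] .
  have "integrable (density M (\<lambda>x. ennreal (R x))) (tsum_term P Q)"
  proof (rule N.integrable_const_bound[where B = 1])
    show "AE x in density M (\<lambda>x. ennreal (R x)). norm (tsum_term P Q x) \<le> 1"
      using is_densityD(2)[OF assms(1)] is_densityD(2)[OF assms(2)]
      by (intro AE_I2) (simp add: tsum_term_abs_le_1)
  qed measurable
  then have "(\<integral>X. test_stat P Q n X \<partial>PiM {..<n} (\<lambda>_. density M (\<lambda>x. ennreal (R x))))
      = (\<integral>x. tsum_term P Q x \<partial>density M (\<lambda>x. ennreal (R x)))"
    unfolding test_stat_def using integral_PiM_sample_mean N.prob_space_axioms assms(4) by blast
  also have "\<dots> = (\<integral>x. R x * tsum_term P Q x \<partial>M)"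
    using is_densityD(2)[OF assms(3)] by (subst integral_density) auto
  finally show ?thesis .
qed

lemma integral_tsum_term_lower_bound:
  assumes P: "is_density M P" and Q: "is_density M Q" and R: "is_density M R" and "0 < b"
  shows "(1 - b) * (hellinger M Q R)\<^sup>2 - (2 + 1 / b) * (hellinger M P R)\<^sup>2
         \<le> (\<integral>x. R x * tsum_term P Q x \<partial>M)"
proof -
  note [measurable] = is_densityD(1)[OF P] is_densityD(1)[OF Q] is_densityD(1)[OF R]
  note nonneg = is_densityD(2)[OF P] is_densityD(2)[OF Q] is_densityD(2)[OF R]
  let ?U = "\<lambda>x. (sqrt (Q x) - sqrt (R x))\<^sup>2" and ?W = "\<lambda>x. (sqrt (P x) - sqrt (R x))\<^sup>2"
  have int_U: "integrable M ?U" and int_W: "integrable M ?W"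
    using integrable_sqrt_diff_sq Q P R by blast+
  have int_RT: "integrable M (\<lambda>x. R x * tsum_term P Q x)"
  proof (rule Bochner_Integration.integrable_bound[OF is_densityD(3)[OF R]])
    show "AE x in M. norm (R x * tsum_term P Q x) \<le> norm (R x)"
      using nonneg tsum_term_abs_le_1[of P _ Q]
      by (intro AE_I2) (simp add: abs_mult mult_left_le)
  qed measurable
  have "(1 - b) * (hellinger M Q R)\<^sup>2 - (2 + 1 / b) * (hellinger M P R)\<^sup>2
      = (\<integral>x. (1 - b) / 2 * ?U x - (1 + 1 / (2 * b)) * ?W x \<partial>M)"
    using int_U int_W \<open>0 < b\<close> by (simp add: hellinger_sq field_simps)
  also have "\<dots> \<le> (\<integral>x. R x * tsum_term P Q x - (P x - Q x) / 2 \<partial>M)"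
    using int_U int_W int_RT is_densityD(3)[OF P] is_densityD(3)[OF Q] nonneg \<open>0 < b\<close>
    by (intro integral_mono tsum_term_lower_bound) auto
  also have "\<dots> = (\<integral>x. R x * tsum_term P Q x \<partial>M)"
    using int_RT is_densityD(3,4)[OF P] is_densityD(3,4)[OF Q] by simp
  finally show ?thesis .
qed

lemma quadratic_tradeoff_lower_bound:
  fixes b e h :: real
  assumes "0 < b" "0 \<le> e" "e \<le> b * h"
  shows "(1 - 2 * b - 2 * b\<^sup>2) * h\<^sup>2 \<le> (1 - b) * h\<^sup>2 - (2 + 1 / b) * e\<^sup>2"
proof -
  have "e\<^sup>2 \<le> (b * h)\<^sup>2"
    using assms by (intro power_mono) auto
  then have "(2 + 1 / b) * e\<^sup>2 \<le> (2 + 1 / b) * (b * h)\<^sup>2"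
    using assms(1) by (intro mult_left_mono) auto
  also have "\<dots> = (2 * b\<^sup>2 + b) * h\<^sup>2"
    using assms(1) by (simp add: field_simps power2_eq_square)
  finally show ?thesis
    by (simp add: algebra_simps)
qed

theorem lemma4:
  fixes M :: "'a measure" and P Q R :: "'a \<Rightarrow> real" and \<alpha> :: real and n :: nat
  assumes "sigma_finite_measure M"
    and "is_density M P" and "is_density M Q" and "is_density M R"
    and "1 / sqrt 2 < \<alpha>" and "\<alpha> < 1"
    and "hellinger M Q R \<ge> sqrt 2 / (sqrt 2 * \<alpha> - 1) * hellinger M P R"
    and "n \<ge> 1"
  shows "(\<integral> X. test_stat P Q n X \<partial>(PiM {..<n} (\<lambda>_. density M (\<lambda>x. ennreal (R x)))))
           \<ge> 2 * (1 - \<alpha>\<^sup>2) * (hellinger M Q R)\<^sup>2"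
proof -
  define b where "b = \<alpha> - 1 / sqrt 2"
  have "0 < b"
    using assms(5) by (simp add: b_def)
  have "sqrt 2 / (sqrt 2 * \<alpha> - 1) = 1 / b"
    by (simp add: b_def field_simps)
  then have PR_le_QR: "hellinger M P R \<le> b * hellinger M Q R"
    using assms(7) \<open>0 < b\<close> by (simp add: field_simps)
  have "2 * (1 - \<alpha>\<^sup>2) = 1 - 2 * sqrt 2 * b - 2 * b\<^sup>2"
    by (simp add: b_def power2_eq_square field_simps)
  moreover have "b \<le> sqrt 2 * b"
    using \<open>0 < b\<close> by simp
  ultimately have "2 * (1 - \<alpha>\<^sup>2) * (hellinger M Q R)\<^sup>2 \<le> (1 - 2 * b - 2 * b\<^sup>2) * (hellinger M Q R)\<^sup>2"
    by (intro mult_right_mono) auto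
  also have "\<dots> \<le> (1 - b) * (hellinger M Q R)\<^sup>2 - (2 + 1 / b) * (hellinger M P R)\<^sup>2"
    by (rule quadratic_tradeoff_lower_bound[OF \<open>0 < b\<close> hellinger_nonneg PR_le_QR])
  also have "\<dots> \<le> (\<integral>x. R x * tsum_term P Q x \<partial>M)"
    by (rule integral_tsum_term_lower_bound[OF assms(2-4) \<open>0 < b\<close>])
  also have "\<dots> = (\<integral>X. test_stat P Q n X \<partial>PiM {..<n} (\<lambda>_. density M (\<lambda>x. ennreal (R x))))"
    by (rule expectation_test_stat[OF assms(2-4,8), symmetric])
  finally show ?thesis .
qed

end
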